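(* Let $\mathcal H$ be a Hilbert space and $N\geq 1$, and let $\mathcal O^N(\mathcal H)$ be the convex set of $N$-outcome POVMs $\mathsf M=(M_1,\dots,M_N)$ on $\mathcal H$. Then the boundary $\partial\mathcal O^N(\mathcal H)$ consists exactly of those $\mathsf M$ for which $0$ lies in the spectrum of $M_j$ for some $j\in\{1,\dots,N\}$.
   Context: An $N$-outcome POVM on $\mathcal H$ is a collection of positive operators $M_1,\dots,M_N\in\mathcal L(\mathcal H)$ with $\sum_j M_j=I$; convex combinations are taken componentwise. For elements of a convex set $Z$, $x\leq_C y$ means $y=tx+(1-t)z$ for some $z\in Z$ and $0<t\leq 1$; the boundary $\partial Z$ is the set of $y\in Z$ for which some $x\in Z$ has $x\not\leq_C y$. *)

theory Defs
  imports "HOL-Analysis.Analysis"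
begin

text \<open>A complex Hilbert space is modelled as a real Hilbert space
('a :: {real_inner, complete_space}) together with a complex structure J
(multiplication by i): an orthogonal bounded real-linear map with J o J = -id.\<close>

definition complex_structure :: "('a::real_inner \<Rightarrow>\<^sub>L 'a) \<Rightarrow> bool" where
  "complex_structure J \<longleftrightarrow>
     (\<forall>x. J (J x) = - x) \<and> (\<forall>x y. inner (J x) (J y) = inner x y)"

text \<open>Complex inner product, linear in the second argument.\<close>
definition cinner :: "('a::real_inner \<Rightarrow>\<^sub>L 'a) \<Rightarrow> 'a \<Rightarrow> 'a \<Rightarrow> complex" where
  "cinner J x y = Complex (inner x y) (inner x (J y))"

definition cpx_linear :: "('a::real_normed_vector \<Rightarrow>\<^sub>L 'a) \<Rightarrow> ('a \<Rightarrow>\<^sub>L 'a) \<Rightarrow> bool" where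
  "cpx_linear J A \<longleftrightarrow> A o\<^sub>L J = J o\<^sub>L A"

definition positive_op :: "('a::real_inner \<Rightarrow>\<^sub>L 'a) \<Rightarrow> ('a \<Rightarrow>\<^sub>L 'a) \<Rightarrow> bool" where
  "positive_op J A \<longleftrightarrow> cpx_linear J A \<and>
     (\<forall>x. Im (cinner J x (A x)) = 0 \<and> Re (cinner J x (A x)) \<ge> 0)"

definition cscalar :: "('a::real_normed_vector \<Rightarrow>\<^sub>L 'a) \<Rightarrow> complex \<Rightarrow> ('a \<Rightarrow>\<^sub>L 'a)" where
  "cscalar J c = Re c *\<^sub>R id_blinfun + Im c *\<^sub>R J"

definition op_invertible :: "('a::real_normed_vector \<Rightarrow>\<^sub>L 'a) \<Rightarrow> ('a \<Rightarrow>\<^sub>L 'a) \<Rightarrow> bool" where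
  "op_invertible J A \<longleftrightarrow>
     (\<exists>B. cpx_linear J B \<and> B o\<^sub>L A = id_blinfun \<and> A o\<^sub>L B = id_blinfun)"

definition op_spectrum :: "('a::real_normed_vector \<Rightarrow>\<^sub>L 'a) \<Rightarrow> ('a \<Rightarrow>\<^sub>L 'a) \<Rightarrow> complex set" where
  "op_spectrum J A = {c. \<not> op_invertible J (A - cscalar J c)}"

text \<open>N-outcome POVMs, represented as functions nat => operators, indexed by 1..N
and set to 0 outside 1..N.\<close>
definition povms :: "('a::real_inner \<Rightarrow>\<^sub>L 'a) \<Rightarrow> nat \<Rightarrow> (nat \<Rightarrow> ('a \<Rightarrow>\<^sub>L 'a)) set" where
  "povms J N = {M. (\<forall>j\<in>{1..N}. positive_op J (M j)) \<and>
                   (\<Sum>j=1..N. M j) = id_blinfun \<and>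
                   (\<forall>j. j \<notin> {1..N} \<longrightarrow> M j = 0)}"

definition leC :: "(nat \<Rightarrow> ('a::real_normed_vector \<Rightarrow>\<^sub>L 'a)) set \<Rightarrow>
                   (nat \<Rightarrow> ('a \<Rightarrow>\<^sub>L 'a)) \<Rightarrow> (nat \<Rightarrow> ('a \<Rightarrow>\<^sub>L 'a)) \<Rightarrow> bool" where
  "leC Z x y \<longleftrightarrow> (\<exists>z\<in>Z. \<exists>t::real. 0 < t \<and> t \<le> 1 \<and>
                    (\<forall>j. y j = t *\<^sub>R x j + (1 - t) *\<^sub>R z j))"

definition cboundary :: "(nat \<Rightarrow> ('a::real_normed_vector \<Rightarrow>\<^sub>L 'a)) set \<Rightarrow>
                         (nat \<Rightarrow> ('a \<Rightarrow>\<^sub>L 'a)) set" where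
  "cboundary Z = {y\<in>Z. \<exists>x\<in>Z. \<not> leC Z x y}"

end

theory Submission
  imports Defs
begin

text \<open>Everything rests on one fact: a positive operator is invertible iff it is bounded below
by a positive multiple of the identity. If every \<open>M j\<close> is invertible, then \<open>M j \<ge> c I\<close>
for a common \<open>c > 0\<close>, and since every POVM element lies below \<open>I\<close>, \<open>M - t x\<close> remains
positive for small \<open>t\<close>; rescaling it gives the \<open>z\<close> with \<open>M = t x + (1 - t) z\<close>. If some
\<open>M j\<close> is not invertible, take \<open>x\<close> with \<open>x j = I\<close> and all other components zero:
\<open>M = t x + (1 - t) z\<close> would give \<open>M j \<ge> t I\<close>, so \<open>M j\<close> would be invertible.\<close>

definition symmetric_nonneg :: "('a::real_inner \<Rightarrow>\<^sub>L 'a) \<Rightarrow> bool" where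
  "symmetric_nonneg A \<longleftrightarrow>
     (\<forall>u w. inner u (A w) = inner (A u) w) \<and> (\<forall>x. 0 \<le> inner x (A x))"

lemma blinfun_compose_id_apply:
  assumes "B o\<^sub>L A = id_blinfun"
  shows "B (A v) = v"
  by (metis assms blinfun_apply_blinfun_compose id_blinfun.rep_eq)

lemma cpx_linear_iff: "cpx_linear J A \<longleftrightarrow> (\<forall>v. A (J v) = J (A v))"
  unfolding cpx_linear_def
  by (auto intro: blinfun_eqI dest: arg_cong[where f="\<lambda>F. blinfun_apply F _"])

lemma positive_op_iff:
  "positive_op J A \<longleftrightarrow>
     (\<forall>v. A (J v) = J (A v)) \<and> (\<forall>x. inner x (J (A x)) = 0) \<and> (\<forall>x. 0 \<le> inner x (A x))"
  unfolding positive_op_def cpx_linear_iff cinner_def by auto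

lemma complex_structure_inner_self:
  assumes "complex_structure J"
  shows "inner x (J x) = 0"
proof -
  from assms have "inner (J x) (J (J x)) = inner x (J x)" and "J (J x) = - x"
    unfolding complex_structure_def by blast+
  then show ?thesis by (simp add: inner_commute)
qed

text \<open>Over the complex numbers a positive operator is automatically self-adjoint; here this is
the polarization of \<open>\<langle>x, J (A x)\<rangle> = 0\<close> evaluated at \<open>J u\<close> and \<open>w\<close>.\<close>

lemma positive_op_symmetric_nonneg:
  assumes J: "complex_structure J" and P: "positive_op J A"
  shows "symmetric_nonneg A"
proof -
  have im: "\<And>x. inner x (J (A x)) = 0" and cl: "\<And>v. A (J v) = J (A v)"
    and nn: "\<And>x. 0 \<le> inner x (A x)"
    using P unfolding positive_op_iff by auto
  have polar: "inner u (J (A w)) + inner w (J (A u)) = 0" for u w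
    using im[of "u + w"] im[of u] im[of w]
    by (simp add: blinfun.add_right inner_add_left inner_add_right)
  have "inner u (A w) = inner (A u) w" for u w
  proof -
    have "inner (J u) (J (A w)) + inner w (J (A (J u))) = 0" by (rule polar)
    then show ?thesis
      using J cl unfolding complex_structure_def by (simp add: inner_commute)
  qed
  with nn show ?thesis unfolding symmetric_nonneg_def by blast
qed

lemma symmetric_nonneg_Cauchy_Schwarz:
  assumes "symmetric_nonneg A"
  shows "(inner u (A w))\<^sup>2 \<le> inner u (A u) * inner w (A w)"
proof -
  have sym: "\<And>u w. inner u (A w) = inner (A u) w" and nn: "\<And>x. 0 \<le> inner x (A x)"
    using assms unfolding symmetric_nonneg_def by auto
  define a b c where "a = inner u (A u)" and "b = inner u (A w)" and "c = inner w (A w)"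
  have quadratic: "0 \<le> a + 2 * r * b + r\<^sup>2 * c" for r
  proof -
    have "0 \<le> inner (u + r *\<^sub>R w) (A (u + r *\<^sub>R w))" by (rule nn)
    also have "\<dots> = a + r * inner w (A u) + r * b + r\<^sup>2 * c"
      by (simp add: a_def b_def c_def blinfun.add_right blinfun.scaleR_right algebra_simps
          power2_eq_square)
    also have "inner w (A u) = b" using sym[of w u] by (simp add: b_def inner_commute)
    finally show ?thesis by (simp add: algebra_simps)
  qed
  show ?thesis
  proof (cases "c = 0")
    case True
    have "b = 0"
    proof (rule ccontr)
      assume "b \<noteq> 0"
      with quadratic[of "- (a + 1) / (2 * b)"] True show False by (simp add: field_simps)
    qed
    with True show ?thesis by (simp add: b_def c_def)
  next
    case False
    then have "0 < c" using nn[of w] by (simp add: c_def)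
    with quadratic[of "- b / c"] have "b\<^sup>2 \<le> a * c"
      by (simp add: power2_eq_square field_simps)
    then show ?thesis by (simp add: a_def b_def c_def)
  qed
qed

lemma inner_blinfun_le_norm:
  fixes A :: "'a::real_inner \<Rightarrow>\<^sub>L 'a"
  shows "inner v (A v) \<le> norm A * (norm v)\<^sup>2"
proof -
  have "inner v (A v) \<le> norm v * norm (A v)" by (rule norm_cauchy_schwarz)
  also have "\<dots> \<le> norm v * (norm A * norm v)" by (intro mult_left_mono norm_blinfun) auto
  finally show ?thesis by (simp add: power2_eq_square algebra_simps)
qed

lemma symmetric_nonneg_norm_apply_pow4_le:
  assumes A: "symmetric_nonneg A"
  shows "((norm (A v))\<^sup>2)\<^sup>2 \<le> inner v (A v) * inner (A v) (A (A v))"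
proof -
  have "inner v (A (A v)) = (norm (A v))\<^sup>2"
    using A unfolding symmetric_nonneg_def by (simp add: power2_norm_eq_inner)
  with symmetric_nonneg_Cauchy_Schwarz[OF A, of v "A v"] show ?thesis by simp
qed

lemma symmetric_nonneg_norm_apply_le:
  assumes A: "symmetric_nonneg A" and k: "0 \<le> k"
    and form_le: "\<And>v. inner v (A v) \<le> k * (norm v)\<^sup>2"
  shows "norm (A v) \<le> k * norm v"
proof -
  define w where "w = A v"
  have nn: "\<And>x. 0 \<le> inner x (A x)" using A unfolding symmetric_nonneg_def by auto
  have "((norm w)\<^sup>2)\<^sup>2 \<le> inner v (A v) * inner w (A w)"
    unfolding w_def by (rule symmetric_nonneg_norm_apply_pow4_le[OF A])
  also have "\<dots> \<le> (k * (norm v)\<^sup>2) * (k * (norm w)\<^sup>2)"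
    by (intro mult_mono form_le nn) (use k in auto)
  also have "\<dots> = (k * norm v * norm w)\<^sup>2" by (simp add: power2_eq_square)
  finally have "(norm w)\<^sup>2 \<le> k * norm v * norm w"
    by (rule power2_le_imp_le) (use k in auto)
  then have le: "norm w * norm w \<le> (k * norm v) * norm w" by (simp add: power2_eq_square)
  show ?thesis
  proof (cases "w = 0")
    case True
    with k show ?thesis by (simp add: w_def)
  next
    case False
    with le show ?thesis by (simp add: mult_le_cancel_right w_def)
  qed
qed

lemma symmetric_nonneg_norm_apply_sq_le:
  assumes A: "symmetric_nonneg A"
  shows "(norm (A v))\<^sup>2 \<le> norm A * inner v (A v)"
proof -
  define w where "w = A v"
  have nn: "\<And>x. 0 \<le> inner x (A x)" using A unfolding symmetric_nonneg_def by auto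
  have "(norm w)\<^sup>2 * (norm w)\<^sup>2 \<le> inner v (A v) * inner w (A w)"
    using symmetric_nonneg_norm_apply_pow4_le[OF A, of v] by (simp add: w_def power2_eq_square)
  also have "\<dots> \<le> inner v (A v) * (norm A * (norm w)\<^sup>2)"
    by (intro mult_left_mono inner_blinfun_le_norm nn)
  finally have le: "(norm w)\<^sup>2 * (norm w)\<^sup>2 \<le> (norm A * inner v (A v)) * (norm w)\<^sup>2"
    by (simp add: algebra_simps)
  show ?thesis
  proof (cases "w = 0")
    case True
    then show ?thesis using nn[of v] by (simp add: w_def)
  next
    case False
    then have "0 < (norm w)\<^sup>2" by simp
    from mult_right_le_imp_le[OF le this] show ?thesis by (simp add: w_def)
  qed
qed

lemma coercive_norm_apply_ge:
  assumes t: "0 < t" and coercive: "t * (norm v)\<^sup>2 \<le> inner v (A v)"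
  shows "t * norm v \<le> norm (A v)"
proof -
  have le: "(t * norm v) * norm v \<le> norm (A v) * norm v"
    using coercive norm_cauchy_schwarz[of v "A v"] by (simp add: power2_eq_square algebra_simps)
  show ?thesis
  proof (cases "v = 0")
    case False
    with le show ?thesis by (simp add: mult_le_cancel_right)
  qed simp
qed

text \<open>Scaling a coercive symmetric \<open>A\<close> by \<open>s = 1 / (\<parallel>A\<parallel> + t)\<close> squeezes the quadratic form of
\<open>id - s A\<close> between \<open>0\<close> and \<open>1 - s t\<close>, so \<open>id - s A\<close> is a strict contraction.\<close>

lemma coercive_symmetric_contraction:
  fixes A :: "'a::real_inner \<Rightarrow>\<^sub>L 'a"
  assumes sym: "\<And>u w. inner u (A w) = inner (A u) w"
    and t: "0 < t" and coercive: "\<And>v. t * (norm v)\<^sup>2 \<le> inner v (A v)"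
  obtains s k where "0 < s" "0 \<le> k" "k < 1" "\<And>v. norm (v - s *\<^sub>R A v) \<le> k * norm v"
proof -
  define s where "s = 1 / (norm A + t)"
  define k where "k = 1 - s * t"
  have "0 < norm A + t" using t by (simp add: add_nonneg_pos)
  then have s: "0 < s" "s * norm A + s * t = 1" by (simp_all add: s_def add_divide_distrib[symmetric])
  define C where "C = id_blinfun - s *\<^sub>R A"
  have C_apply: "\<And>v. C v = v - s *\<^sub>R A v"
    by (simp add: C_def minus_blinfun.rep_eq scaleR_blinfun.rep_eq)
  have form_C: "\<And>v. inner v (C v) = (norm v)\<^sup>2 - s * inner v (A v)"
    by (simp add: C_apply inner_diff_right power2_norm_eq_inner)
  have C: "symmetric_nonneg C"
    unfolding symmetric_nonneg_def
  proof (intro conjI allI)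
    fix u w show "inner u (C w) = inner (C u) w"
      using sym by (simp add: C_apply inner_diff_left inner_diff_right inner_commute)
  next
    fix v
    have "s * inner v (A v) \<le> s * (norm A * (norm v)\<^sup>2)"
      using s inner_blinfun_le_norm[of v A] by (intro mult_left_mono) auto
    also have "\<dots> = (s * norm A) * (norm v)\<^sup>2" by (simp add: mult.assoc)
    also have "\<dots> \<le> (norm v)\<^sup>2"
      using s mult_pos_pos[OF s(1) t] by (intro mult_left_le_one_le) auto
    finally show "0 \<le> inner v (C v)" using form_C[of v] by simp
  qed
  have form_C_le: "inner v (C v) \<le> k * (norm v)\<^sup>2" for v
  proof -
    have "s * (t * (norm v)\<^sup>2) \<le> s * inner v (A v)"
      by (intro mult_left_mono coercive) (use s in auto)
    then show ?thesis by (simp add: form_C k_def algebra_simps)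
  qed
  have "0 \<le> s * norm A" "0 < s * t" using s(1) t by simp_all
  then have k: "0 \<le> k" "k < 1" using s(2) by (auto simp: k_def)
  have "norm (v - s *\<^sub>R A v) \<le> k * norm v" for v
    using symmetric_nonneg_norm_apply_le[OF C k(1) form_C_le] by (simp add: C_apply)
  with s(1) k show ?thesis by (rule that)
qed

lemma surj_if_contraction:
  fixes A :: "'a::{real_normed_vector, complete_space} \<Rightarrow>\<^sub>L 'a"
  assumes s: "s \<noteq> 0" and k: "0 \<le> k" "k < 1"
    and contraction: "\<And>v. norm (v - s *\<^sub>R A v) \<le> k * norm v"
  shows "surj A"
  unfolding surj_def
proof
  fix y
  define f where "f x = x - s *\<^sub>R A x + s *\<^sub>R y" for x
  have "dist (f x) (f x') \<le> k * dist x x'" for x x'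
    using contraction[of "x - x'"]
    by (simp add: f_def dist_norm blinfun.diff_right algebra_simps)
  then obtain x where "f x = x" using banach_fix_type[OF k] by blast
  then have "A x = y" using s by (auto simp: f_def algebra_simps)
  then show "\<exists>x. y = A x" by blast
qed

lemma bounded_below_surj_invertible:
  fixes A :: "'a::real_normed_vector \<Rightarrow>\<^sub>L 'a"
  assumes t: "0 < t" and below: "\<And>v. t * norm v \<le> norm (A v)" and "surj A"
  obtains B where "B o\<^sub>L A = id_blinfun" "A o\<^sub>L B = id_blinfun"
proof -
  define g where "g = inv A"
  have "inj A"
  proof (rule injI)
    fix x y assume "A x = A y"
    then show "x = y"
      using below[of "x - y"] t by (simp add: blinfun.diff_right mult_le_0_iff)
  qed
  then have gA: "\<And>x. g (A x) = x" by (simp add: g_def)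
  have Ag: "\<And>y. A (g y) = y" using \<open>surj A\<close> by (simp add: g_def surj_f_inv_f)
  have "bounded_linear g"
  proof (rule bounded_linear_intro[where K="1/t"])
    fix x y r
    show "g (x + y) = g x + g y" by (metis Ag gA blinfun.add_right)
    show "g (r *\<^sub>R x) = r *\<^sub>R g x" by (metis Ag gA blinfun.scaleR_right)
    show "norm (g x) \<le> norm x * (1/t)" using below[of "g x"] t by (simp add: Ag field_simps)
  qed
  then show ?thesis
    by (intro that[of "Blinfun g"] blinfun_eqI) (simp_all add: bounded_linear_Blinfun_apply Ag gA)
qed

lemma coercive_symmetric_invertible:
  fixes A :: "'a::{real_inner, complete_space} \<Rightarrow>\<^sub>L 'a"
  assumes sym: "\<And>u w. inner u (A w) = inner (A u) w"
    and t: "0 < t" and coercive: "\<And>v. t * (norm v)\<^sup>2 \<le> inner v (A v)"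
  obtains B where "B o\<^sub>L A = id_blinfun" "A o\<^sub>L B = id_blinfun"
proof -
  obtain s k where "0 < s" "0 \<le> k" "k < 1" "\<And>v. norm (v - s *\<^sub>R A v) \<le> k * norm v"
    using coercive_symmetric_contraction[OF sym t coercive] by blast
  then have "surj A" by (intro surj_if_contraction[of s k]) auto
  moreover have "\<And>v. t * norm v \<le> norm (A v)" using coercive_norm_apply_ge[OF t coercive] .
  ultimately show ?thesis using bounded_below_surj_invertible[OF t] that by blast
qed

lemma left_invertible_symmetric_nonneg_coercive:
  assumes A: "symmetric_nonneg A" and B: "B o\<^sub>L A = id_blinfun"
  obtains c where "0 < c" "\<And>v. c * (norm v)\<^sup>2 \<le> inner v (A v)"
proof -
  define K where "K = (norm B)\<^sup>2 * norm A + 1"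
  have K: "0 < K" by (simp add: K_def add_nonneg_pos)
  have nn: "\<And>x. 0 \<le> inner x (A x)" using A unfolding symmetric_nonneg_def by auto
  have "(norm v)\<^sup>2 \<le> K * inner v (A v)" for v
  proof -
    have "norm v \<le> norm B * norm (A v)" by (metis blinfun_compose_id_apply[OF B] norm_blinfun)
    then have "(norm v)\<^sup>2 \<le> (norm B)\<^sup>2 * (norm (A v))\<^sup>2"
      by (simp add: power_mult_distrib[symmetric] power_mono)
    also have "\<dots> \<le> (norm B)\<^sup>2 * (norm A * inner v (A v))"
      by (intro mult_left_mono symmetric_nonneg_norm_apply_sq_le[OF A]) auto
    also have "\<dots> \<le> K * inner v (A v)"
      using nn[of v] by (simp add: K_def algebra_simps)
    finally show ?thesis .
  qed
  with K show ?thesis by (intro that[of "1 / K"]) (auto simp: field_simps)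
qed

lemma coercive_positive_op_invertible:
  fixes A :: "'a::{real_inner, complete_space} \<Rightarrow>\<^sub>L 'a"
  assumes J: "complex_structure J" and P: "positive_op J A"
    and t: "0 < t" and coercive: "\<And>v. t * (norm v)\<^sup>2 \<le> inner v (A v)"
  shows "op_invertible J A"
proof -
  have "\<And>u w. inner u (A w) = inner (A u) w"
    using positive_op_symmetric_nonneg[OF J P] unfolding symmetric_nonneg_def by blast
  then obtain B where BA: "B o\<^sub>L A = id_blinfun" and AB: "A o\<^sub>L B = id_blinfun"
    using coercive_symmetric_invertible t coercive by metis
  have cl: "\<And>v. A (J v) = J (A v)" using P unfolding positive_op_iff by auto
  have "B (J v) = J (B v)" for v
    using blinfun_compose_id_apply[OF BA, of "J (B v)"] blinfun_compose_id_apply[OF AB, of v]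
    by (metis cl)
  then show ?thesis unfolding op_invertible_def cpx_linear_iff using BA AB by blast
qed

lemma zero_in_op_spectrum_iff: "0 \<in> op_spectrum J A \<longleftrightarrow> \<not> op_invertible J A"
  by (simp add: op_spectrum_def cscalar_def)

lemma povmsD:
  assumes "M \<in> povms J N"
  shows "\<And>j. j \<in> {1..N} \<Longrightarrow> positive_op J (M j)" "(\<Sum>j=1..N. M j) = id_blinfun"
    "\<And>j. j \<notin> {1..N} \<Longrightarrow> M j = 0"
  using assms unfolding povms_def by auto

lemma povms_inner_le_norm:
  assumes x: "x \<in> povms J N" and j: "j \<in> {1..N}"
  shows "inner v (x j v) \<le> (norm v)\<^sup>2"
proof -
  have "inner v (x j v) \<le> (\<Sum>i=1..N. inner v (x i v))"
    by (rule member_le_sum) (use j povmsD(1)[OF x] in \<open>auto simp: positive_op_iff\<close>)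
  also have "\<dots> = inner v ((\<Sum>i=1..N. x i) v)" by (simp add: blinfun.sum_left inner_sum_right)
  also have "\<dots> = (norm v)\<^sup>2" using povmsD(2)[OF x] by (simp add: power2_norm_eq_inner)
  finally show ?thesis .
qed

lemma povms_uniformly_coercive:
  assumes J: "complex_structure J" and N: "1 \<le> N"
    and M: "M \<in> povms J N" and inv: "\<forall>j\<in>{1..N}. op_invertible J (M j)"
  obtains c where "0 < c" "\<And>j v. j \<in> {1..N} \<Longrightarrow> c * (norm v)\<^sup>2 \<le> inner v (M j v)"
proof -
  have "\<forall>j\<in>{1..N}. \<exists>c. 0 < c \<and> (\<forall>v. c * (norm v)\<^sup>2 \<le> inner v (M j v))"
  proof
    fix j assume j: "j \<in> {1..N}"
    obtain B where B: "B o\<^sub>L M j = id_blinfun" using inv j unfolding op_invertible_def by blast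
    obtain c where "0 < c" "\<And>v. c * (norm v)\<^sup>2 \<le> inner v (M j v)"
      using left_invertible_symmetric_nonneg_coercive
        [OF positive_op_symmetric_nonneg[OF J povmsD(1)[OF M j]] B] by blast
    then show "\<exists>c. 0 < c \<and> (\<forall>v. c * (norm v)\<^sup>2 \<le> inner v (M j v))" by blast
  qed
  from bchoice[OF this] obtain cf
    where cf: "\<forall>j\<in>{1..N}. 0 < cf j \<and> (\<forall>v. cf j * (norm v)\<^sup>2 \<le> inner v (M j v))"
    by blast
  define c where "c = Min (cf ` {1..N})"
  have "{1..N} \<noteq> {}" using N by auto
  then have "0 < c" using cf by (simp add: c_def)
  moreover have "c * (norm v)\<^sup>2 \<le> inner v (M j v)" if j: "j \<in> {1..N}" for j v
  proof -
    have "c \<le> cf j" unfolding c_def using j by (intro Min_le) auto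
    then have "c * (norm v)\<^sup>2 \<le> cf j * (norm v)\<^sup>2" by (rule mult_right_mono) simp
    also have "\<dots> \<le> inner v (M j v)" using cf j by blast
    finally show ?thesis .
  qed
  ultimately show ?thesis by (rule that)
qed

lemma leC_povms_if_invertible:
  assumes J: "complex_structure J" and N: "1 \<le> N"
    and M: "M \<in> povms J N" and inv: "\<forall>j\<in>{1..N}. op_invertible J (M j)"
    and x: "x \<in> povms J N"
  shows "leC (povms J N) x M"
proof -
  obtain c where c: "0 < c" "\<And>j v. j \<in> {1..N} \<Longrightarrow> c * (norm v)\<^sup>2 \<le> inner v (M j v)"
    using povms_uniformly_coercive[OF J N M inv] by blast
  define t where "t = min c 1 / 2"
  have t: "0 < t" "t < 1" "t \<le> c" using c by (auto simp: t_def)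
  define z where "z j = (1 / (1 - t)) *\<^sub>R (M j - t *\<^sub>R x j)" for j
  have z_apply: "\<And>j v. z j v = (1 / (1 - t)) *\<^sub>R (M j v - t *\<^sub>R x j v)"
    by (simp add: z_def scaleR_blinfun.rep_eq minus_blinfun.rep_eq)
  have "positive_op J (z j)" if j: "j \<in> {1..N}" for j
  proof -
    have "t * inner v (x j v) \<le> c * (norm v)\<^sup>2" for v
      using povms_inner_le_norm[OF x j, of v] t
      by (meson less_imp_le mult_left_mono mult_right_mono order_trans zero_le_power2)
    then have "\<And>v. t * inner v (x j v) \<le> inner v (M j v)"
      using c(2)[OF j] order_trans by blast
    then show ?thesis
      using povmsD(1)[OF M j] povmsD(1)[OF x j] t
      by (simp add: positive_op_iff z_apply blinfun.scaleR_right blinfun.diff_right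
          inner_diff_right)
  qed
  moreover have "(\<Sum>j=1..N. z j) = id_blinfun"
  proof -
    have "(\<Sum>j=1..N. z j) = (1 / (1 - t)) *\<^sub>R ((\<Sum>j=1..N. M j) - t *\<^sub>R (\<Sum>j=1..N. x j))"
      by (simp add: z_def scaleR_sum_right[symmetric] sum_subtractf)
    also have "\<dots> = (1 / (1 - t)) *\<^sub>R ((1 - t) *\<^sub>R id_blinfun)"
      using povmsD(2)[OF M] povmsD(2)[OF x] by (simp add: algebra_simps)
    finally show ?thesis using t by simp
  qed
  moreover have "z j = 0" if "j \<notin> {1..N}" for j
    using povmsD(3)[OF M that] povmsD(3)[OF x that] by (simp add: z_def)
  ultimately have "z \<in> povms J N" unfolding povms_def by auto
  moreover have "\<forall>j. M j = t *\<^sub>R x j + (1 - t) *\<^sub>R z j" using t by (simp add: z_def)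
  moreover have "0 < t" "t \<le> 1" using t by simp_all
  ultimately show ?thesis unfolding leC_def by blast
qed

lemma cboundary_povms_if_not_invertible:
  fixes J :: "'a::{real_inner, complete_space} \<Rightarrow>\<^sub>L 'a"
  assumes J: "complex_structure J"
    and M: "M \<in> povms J N" and j: "j \<in> {1..N}" and not_inv: "\<not> op_invertible J (M j)"
  shows "M \<in> cboundary (povms J N)"
proof -
  define x where "x i = (if i = j then id_blinfun else 0 :: 'a \<Rightarrow>\<^sub>L 'a)" for i :: nat
  have x: "x \<in> povms J N"
    unfolding povms_def
  proof (intro CollectI conjI ballI allI impI)
    show "positive_op J (x i)" for i
      using complex_structure_inner_self[OF J] by (simp add: positive_op_iff x_def)
    show "(\<Sum>i=1..N. x i) = id_blinfun" using j by (simp add: x_def)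
    show "x i = 0" if "i \<notin> {1..N}" for i using j that by (auto simp: x_def)
  qed
  have "\<not> leC (povms J N) x M"
  proof
    assume "leC (povms J N) x M"
    then obtain z t where z: "z \<in> povms J N" and t: "0 < t" "t \<le> 1"
      and M_eq: "\<forall>i. M i = t *\<^sub>R x i + (1 - t) *\<^sub>R z i" unfolding leC_def by blast
    have "t * (norm v)\<^sup>2 \<le> inner v (M j v)" for v
      using M_eq[rule_format, of j] t povmsD(1)[OF z j]
      by (simp add: x_def positive_op_iff plus_blinfun.rep_eq scaleR_blinfun.rep_eq
          inner_add_right power2_norm_eq_inner)
    then have "op_invertible J (M j)"
      using coercive_positive_op_invertible[OF J povmsD(1)[OF M j] t(1)] by blast
    with not_inv show False by contradiction
  qed
  with M x show ?thesis unfolding cboundary_def by blast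
qed

theorem proposition13:
  fixes J :: "'a::{real_inner, complete_space} \<Rightarrow>\<^sub>L 'a" and N :: nat
  assumes "complex_structure J" and "N \<ge> 1"
  shows "cboundary (povms J N) =
           {M \<in> povms J N. \<exists>j\<in>{1..N}. (0::complex) \<in> op_spectrum J (M j)}"
proof (intro equalityI subsetI)
  fix M assume "M \<in> cboundary (povms J N)"
  then have M: "M \<in> povms J N" and "\<exists>x\<in>povms J N. \<not> leC (povms J N) x M"
    unfolding cboundary_def by auto
  then have "\<exists>j\<in>{1..N}. \<not> op_invertible J (M j)"
    using leC_povms_if_invertible[OF assms M] by blast
  with M show "M \<in> {M \<in> povms J N. \<exists>j\<in>{1..N}. (0::complex) \<in> op_spectrum J (M j)}"
    by (simp add: zero_in_op_spectrum_iff)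
next
  fix M assume "M \<in> {M \<in> povms J N. \<exists>j\<in>{1..N}. (0::complex) \<in> op_spectrum J (M j)}"
  then show "M \<in> cboundary (povms J N)"
    using cboundary_povms_if_not_invertible[OF assms(1)] by (auto simp: zero_in_op_spectrum_iff)
qed

end
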